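(* Let $U\subset\mathbb{R}^s$ be open, $X:U\to\mathbb{R}^{n+1}_1$ a spacelike embedding, $n^T$ a smooth future directed unit timelike normal field along $X$ and $n^S$ a smooth unit spacelike normal field along $X$ with $\langle n^S,n^T\rangle=0$. Write $\mathbb{LG}(n^T,n^S)(u)=n^T(u)+n^S(u)=(\ell_0(u),\ell_1(u),\dots,\ell_n(u))$ and $\widetilde{\mathbb{LG}}(n^T,n^S)=\mathbb{LG}(n^T,n^S)/\ell_0$. Then for each $i=1,\dots,s$, $$\pi^\tau\circ \widetilde{\mathbb{LG}}(n^T,n^S)_{u_i}=-\sum_{j=1}^s\frac{1}{\ell_0(u)}h_i^j(n^T,n^S)\,X_{u_j}.$$
   Context: $\mathbb{R}^{n+1}_1$ is $\mathbb{R}^{n+1}$ with $\langle x,y\rangle=-x_0y_0+\sum_{i=1}^n x_iy_i$. An embedding is spacelike if all its tangent spaces consist of spacelike vectors ($\langle v,v\rangle>0$). A normal vector at $p=X(u)$ is a vector in the pseudo-orthogonal complement $N_p(M)$ of $T_pM=\mathrm{span}\{X_{u_1},\dots,X_{u_s}\}$. Future directed unit timelike: $\langle n^T,n^T\rangle=-1$ and zeroth coordinate positive; unit spacelike: $\langle n^S,n^S\rangle=1$. $\pi^\tau:\mathbb{R}^{n+1}_1=T_pM\oplus N_p(M)\to T_pM$ is the projection. $g_{ij}=\langle X_{u_i},X_{u_j}\rangle$, $(g^{ij})=(g_{ij})^{-1}$, $h_{ij}(n^T,n^S)=\langle-(n^T+n^S)_{u_i},X_{u_j}\rangle$, and $h_i^j=\sum_m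 h_{im}g^{mj}$. (Note $\ell_0>0$ since $n^T+n^S$ is a nonzero lightlike vector.) *)

theory Defs
  imports "HOL-Analysis.Analysis"
begin

text \<open>Minkowski space R^{n+1}_1 is modelled as real \<times> (real^'n):
  the first component is the time coordinate x_0, the second the spatial
  coordinates (x_1,...,x_n).\<close>

definition lor :: "real \<times> (real^'n) \<Rightarrow> real \<times> (real^'n) \<Rightarrow> real" where
  "lor x y = - fst x * fst y + snd x \<bullet> snd y"

fun Ck_on :: "nat \<Rightarrow> 'a::euclidean_space set \<Rightarrow> ('a \<Rightarrow> 'b::euclidean_space) \<Rightarrow> bool" where
  "Ck_on 0 U f = continuous_on U f"
| "Ck_on (Suc k) U f = (\<exists>f'. (\<forall>x\<in>U. (f has_derivative f' x) (at x)) \<and>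
       (\<forall>v. Ck_on k U (\<lambda>x. f' x v)))"

definition smooth_on :: "'a::euclidean_space set \<Rightarrow> ('a \<Rightarrow> 'b::euclidean_space) \<Rightarrow> bool" where
  "smooth_on U f = (\<forall>k. Ck_on k U f)"

definition pderiv_at :: "(real^'s \<Rightarrow> 'b::real_normed_vector) \<Rightarrow> 's \<Rightarrow> real^'s \<Rightarrow> 'b" where
  "pderiv_at f i u = frechet_derivative f (at u) (axis i 1)"

definition spacelike_embedding :: "(real^'s) set \<Rightarrow> (real^'s \<Rightarrow> real \<times> (real^'n)) \<Rightarrow> bool" where
  "spacelike_embedding U X \<longleftrightarrow>
     smooth_on U X \<and> inj_on X U \<and> homeomorphism U (X ` U) X (inv_into U X) \<and>
     (\<forall>u\<in>U. \<forall>v. v \<noteq> 0 \<longrightarrow> lor (frechet_derivative X (at u) v) (frechet_derivative X (at u) v) > 0)"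

definition tangent_space :: "(real^'s \<Rightarrow> real \<times> (real^'n)) \<Rightarrow> real^'s \<Rightarrow> (real \<times> (real^'n)) set" where
  "tangent_space X u = span (range (\<lambda>i. pderiv_at X i u))"

definition normal_vector :: "(real^'s \<Rightarrow> real \<times> (real^'n)) \<Rightarrow> real^'s \<Rightarrow> real \<times> (real^'n) \<Rightarrow> bool" where
  "normal_vector X u w \<longleftrightarrow> (\<forall>i. lor w (pderiv_at X i u) = 0)"

definition pi_tau :: "(real^'s \<Rightarrow> real \<times> (real^'n)) \<Rightarrow> real^'s \<Rightarrow> real \<times> (real^'n) \<Rightarrow> real \<times> (real^'n)" where
  "pi_tau X u v = (THE w. w \<in> tangent_space X u \<and> normal_vector X u (v - w))"

definition gmat :: "(real^'s \<Rightarrow> real \<times> (real^'n)) \<Rightarrow> real^'s \<Rightarrow> real^'s^'s" where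
  "gmat X u = (\<chi> i j. lor (pderiv_at X i u) (pderiv_at X j u))"

definition hmat :: "(real^'s \<Rightarrow> real \<times> (real^'n)) \<Rightarrow> (real^'s \<Rightarrow> real \<times> (real^'n))
     \<Rightarrow> (real^'s \<Rightarrow> real \<times> (real^'n)) \<Rightarrow> real^'s \<Rightarrow> real^'s^'s" where
  "hmat X nT nS u = (\<chi> i j. lor (- pderiv_at (\<lambda>v. nT v + nS v) i u) (pderiv_at X j u))"

definition hup :: "(real^'s \<Rightarrow> real \<times> (real^'n)) \<Rightarrow> (real^'s \<Rightarrow> real \<times> (real^'n))
     \<Rightarrow> (real^'s \<Rightarrow> real \<times> (real^'n)) \<Rightarrow> real^'s \<Rightarrow> 's \<Rightarrow> 's \<Rightarrow> real" where
  "hup X nT nS u i j = (\<Sum>m\<in>UNIV. hmat X nT nS u $ i $ m * matrix_inv (gmat X u) $ m $ j)"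

definition LG :: "(real^'s \<Rightarrow> real \<times> (real^'n)) \<Rightarrow> (real^'s \<Rightarrow> real \<times> (real^'n)) \<Rightarrow> real^'s \<Rightarrow> real \<times> (real^'n)" where
  "LG nT nS u = nT u + nS u"

definition LGt :: "(real^'s \<Rightarrow> real \<times> (real^'n)) \<Rightarrow> (real^'s \<Rightarrow> real \<times> (real^'n)) \<Rightarrow> real^'s \<Rightarrow> real \<times> (real^'n)" where
  "LGt nT nS u = (1 / fst (LG nT nS u)) *\<^sub>R LG nT nS u"

end

theory Submission imports Defs begin

text \<open>
  Differentiating \<open>LGt = LG / \<ell>\<^sub>0\<close> gives
  \<open>LGt\<^sub>u\<^sub>i = LG\<^sub>u\<^sub>i / \<ell>\<^sub>0 - ((\<ell>\<^sub>0)\<^sub>u\<^sub>i / \<ell>\<^sub>0\<^sup>2) LG\<close>; the second term is normal,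
  and the first pairs with \<open>X\<^sub>u\<^sub>k\<close> to \<open>-h\<^sub>i\<^sub>k / \<ell>\<^sub>0\<close>, which is exactly the pairing of the
  claimed vector once the index is raised with \<open>g\<^sup>m\<^sup>j\<close>. Positive definiteness of the induced
  metric makes \<open>g\<close> invertible and the tangential part of a vector unique, so \<open>\<pi>\<^sup>\<tau>\<close> is
  determined by these pairings.
\<close>

lemma lor_commute: "lor x y = lor y x"
  by (simp add: lor_def inner_commute)

lemma lor_add_left: "lor (x + y) z = lor x z + lor y z"
  by (simp add: lor_def inner_add_left algebra_simps)

lemma lor_diff_left: "lor (x - y) z = lor x z - lor y z"
  by (simp add: lor_def inner_diff_left algebra_simps)

lemma lor_scaleR_left: "lor (c *\<^sub>R x) z = c * lor x z"
  by (simp add: lor_def algebra_simps)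

lemma lor_minus_left: "lor (- x) z = - lor x z"
  by (simp add: lor_def)

lemma lor_zero_left: "lor 0 z = 0"
  by (simp add: lor_def)

lemma lor_sum_left: "lor (\<Sum>j\<in>A. f j) z = (\<Sum>j\<in>A. lor (f j) z)"
  by (induction A rule: infinite_finite_induct) (simp_all add: lor_add_left lor_zero_left)

lemma lor_sum_right: "lor z (\<Sum>j\<in>A. f j) = (\<Sum>j\<in>A. lor z (f j))"
  using lor_sum_left[of f A z] by (simp add: lor_commute)

lemma lor_scaleR_right: "lor z (c *\<^sub>R x) = c * lor z x"
  by (simp add: lor_def algebra_simps)

text \<open>Cauchy--Schwarz on the spatial parts forces \<open>\<bar>s\<^sub>0\<bar> < t\<^sub>0\<close>.\<close>
lemma fst_timelike_add_spacelike_pos: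
  fixes t s :: "real \<times> (real^'n)"
  assumes "lor t t = -1" "fst t > 0" "lor s s = 1" "lor s t = 0"
  shows "fst (t + s) > 0"
proof -
  have "(snd s \<bullet> snd t)\<^sup>2 \<le> (snd s \<bullet> snd s) * (snd t \<bullet> snd t)"
    by (rule Cauchy_Schwarz_ineq)
  moreover have "snd s \<bullet> snd t = fst s * fst t" "snd s \<bullet> snd s = 1 + fst s * fst s"
      "snd t \<bullet> snd t = fst t * fst t - 1"
    using assms unfolding lor_def by linarith+
  ultimately have "(fst s * fst t)\<^sup>2 \<le> (1 + fst s * fst s) * (fst t * fst t - 1)"
    by simp
  then have "(fst s)\<^sup>2 < (fst t)\<^sup>2"
    by (simp add: power2_eq_square algebra_simps)
  then have "\<bar>fst s\<bar> < fst t"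
    using assms(2) by (simp add: power2_less_imp_less)
  then show ?thesis
    by simp
qed

lemma normal_vector_add:
  "normal_vector X u v \<Longrightarrow> normal_vector X u w \<Longrightarrow> normal_vector X u (v + w)"
  by (simp add: normal_vector_def lor_add_left)

lemma normal_vector_diff:
  "normal_vector X u v \<Longrightarrow> normal_vector X u w \<Longrightarrow> normal_vector X u (v - w)"
  by (simp add: normal_vector_def lor_diff_left)

lemma smooth_on_has_derivative:
  assumes "smooth_on U f" "x \<in> U"
  shows "(f has_derivative frechet_derivative f (at x)) (at x)"
proof -
  have "Ck_on (Suc 0) U f"
    using assms(1) unfolding smooth_on_def by blast
  then show ?thesis
    using assms(2) frechet_derivative_at by fastforce
qed

lemma smooth_on_differentiable: "smooth_on U f \<Longrightarrow> x \<in> U \<Longrightarrow> f differentiable at x"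
  using smooth_on_has_derivative differentiableI by blast

definition spacelike_at :: "(real^'s \<Rightarrow> real \<times> (real^'n)) \<Rightarrow> real^'s \<Rightarrow> bool" where
  "spacelike_at X u \<longleftrightarrow> X differentiable at u \<and>
     (\<forall>v. v \<noteq> 0 \<longrightarrow> lor (frechet_derivative X (at u) v) (frechet_derivative X (at u) v) > 0)"

lemma spacelike_embedding_imp_spacelike_at:
  "spacelike_embedding U X \<Longrightarrow> u \<in> U \<Longrightarrow> spacelike_at X u"
  unfolding spacelike_embedding_def spacelike_at_def by (blast intro: smooth_on_differentiable)

lemma frechet_derivative_eq_sum_pderiv_at:
  assumes "f differentiable at u"
  shows "frechet_derivative f (at u) c = (\<Sum>j\<in>UNIV. c $ j *\<^sub>R pderiv_at f j u)"
proof -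
  have lin: "linear (frechet_derivative f (at u))"
    using assms by (rule linear_frechet_derivative)
  have "(\<Sum>j\<in>UNIV. c $ j *\<^sub>R axis j 1) = c"
    by (simp add: vec_eq_iff axis_def if_distrib cong: if_cong)
  then have "frechet_derivative f (at u) c = frechet_derivative f (at u) (\<Sum>j\<in>UNIV. c $ j *\<^sub>R axis j 1)"
    by simp
  also have "\<dots> = (\<Sum>j\<in>UNIV. c $ j *\<^sub>R pderiv_at f j u)"
    by (simp add: linear_sum[OF lin] linear_scale[OF lin] pderiv_at_def)
  finally show ?thesis .
qed

lemma tangent_space_eq_range:
  assumes "X differentiable at u"
  shows "tangent_space X u = range (frechet_derivative X (at u))"
proof
  have "subspace (range (frechet_derivative X (at u)))"
    using linear_subspace_image[OF linear_frechet_derivative[OF assms] subspace_UNIV] by simp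
  then show "tangent_space X u \<subseteq> range (frechet_derivative X (at u))"
    unfolding tangent_space_def pderiv_at_def by (rule span_minimal[rotated]) auto
  show "range (frechet_derivative X (at u)) \<subseteq> tangent_space X u"
    unfolding tangent_space_def frechet_derivative_eq_sum_pderiv_at[OF assms]
    by clarsimp (intro span_sum span_scale span_base rangeI)
qed

lemma tangent_normal_vector_eq_0:
  assumes X: "spacelike_at X u"
    and w: "w \<in> tangent_space X u" "normal_vector X u w"
  shows "w = 0"
proof -
  have diff: "X differentiable at u"
    using X unfolding spacelike_at_def by blast
  obtain c where c: "w = frechet_derivative X (at u) c"
    using w(1) unfolding tangent_space_eq_range[OF diff] by blast
  have "lor w w = (\<Sum>j\<in>UNIV. c $ j * lor w (pderiv_at X j u))"
    by (subst (2) c) (simp add: frechet_derivative_eq_sum_pderiv_at[OF diff] lor_sum_right lor_scaleR_right)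
  also have "\<dots> = 0"
    using w(2) unfolding normal_vector_def by simp
  finally have "c = 0"
    using X unfolding spacelike_at_def c by force
  then show ?thesis
    using c linear_0[OF linear_frechet_derivative[OF diff]] by simp
qed

lemma pi_tau_eqI:
  assumes X: "spacelike_at X u"
    and w: "w \<in> tangent_space X u" "normal_vector X u (v - w)"
  shows "pi_tau X u v = w"
  unfolding pi_tau_def
proof (rule the_equality)
  fix w' assume w': "w' \<in> tangent_space X u \<and> normal_vector X u (v - w')"
  have "w' - w \<in> tangent_space X u"
    using w' w(1) unfolding tangent_space_def by (blast intro: span_diff)
  moreover have "normal_vector X u (w' - w)"
    using normal_vector_diff[OF w(2), of "v - w'"] w' by (simp add: algebra_simps)
  ultimately show "w' = w"
    using tangent_normal_vector_eq_0[OF X] by fastforce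
qed (use w in blast)

lemma invertible_gmat:
  assumes X: "spacelike_at X u"
  shows "invertible (gmat X u)"
proof -
  have diff: "X differentiable at u"
    using X unfolding spacelike_at_def by blast
  have "c = 0" if "gmat X u *v c = 0" for c
  proof -
    let ?w = "frechet_derivative X (at u) c"
    have "normal_vector X u ?w"
      using that unfolding normal_vector_def
      by (subst lor_commute)
        (simp add: vec_eq_iff matrix_vector_mult_def gmat_def frechet_derivative_eq_sum_pderiv_at[OF diff]
          lor_sum_right lor_scaleR_right mult.commute)
    then have "?w = 0"
      using tangent_normal_vector_eq_0[OF X] tangent_space_eq_range[OF diff] by blast
    then show "c = 0"
      using X unfolding spacelike_at_def by (metis less_irrefl lor_zero_left)
  qed
  then have "inj ((*v) (gmat X u))"
    by (simp add: linear_injective_0[OF matrix_vector_mul_linear])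
  then show ?thesis
    using matrix_left_invertible_injective invertible_left_inverse by blast
qed

lemma matrix_inv_mult_left: "invertible A \<Longrightarrow> matrix_inv A ** A = mat 1"
  unfolding invertible_def matrix_inv_def by (rule someI2_ex) auto

lemma lor_raise_index:
  assumes "invertible (gmat X u)"
  shows "lor (\<Sum>j\<in>UNIV. (\<Sum>m\<in>UNIV. A $ m * matrix_inv (gmat X u) $ m $ j) *\<^sub>R pderiv_at X j u)
             (pderiv_at X k u) = A $ k"
proof -
  let ?G = "gmat X u" and ?Gi = "matrix_inv (gmat X u)"
  have "lor (\<Sum>j\<in>UNIV. (\<Sum>m\<in>UNIV. A $ m * ?Gi $ m $ j) *\<^sub>R pderiv_at X j u) (pderiv_at X k u)
      = (\<Sum>j\<in>UNIV. (\<Sum>m\<in>UNIV. A $ m * ?Gi $ m $ j) * ?G $ j $ k)"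
    by (simp add: lor_sum_left lor_scaleR_left gmat_def)
  also have "\<dots> = (\<Sum>m\<in>UNIV. A $ m * (?Gi ** ?G) $ m $ k)"
    unfolding matrix_matrix_mult_def vec_lambda_beta sum_distrib_left sum_distrib_right mult.assoc
    by (rule sum.swap)
  also have "\<dots> = A $ k"
    by (simp add: matrix_inv_mult_left[OF assms] mat_def if_distrib cong: if_cong)
  finally show ?thesis .
qed

lemma pderiv_at_scaleR_inverse_fst:
  fixes f :: "real^'s \<Rightarrow> real \<times> 'b::real_normed_vector"
  assumes "f differentiable at u" "fst (f u) \<noteq> 0"
  shows "pderiv_at (\<lambda>v. (1 / fst (f v)) *\<^sub>R f v) i u =
           (1 / fst (f u)) *\<^sub>R pderiv_at f i u - (fst (pderiv_at f i u) / (fst (f u))\<^sup>2) *\<^sub>R f u"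
proof -
  let ?Df = "frechet_derivative f (at u)"
  have f: "(f has_derivative ?Df) (at u)"
    using assms(1) frechet_derivative_works by blast
  have "((\<lambda>v. inverse (fst (f v))) has_derivative
          (\<lambda>h. - (inverse (fst (f u)) * fst (?Df h) * inverse (fst (f u))))) (at u)"
    using Deriv.has_derivative_inverse[OF assms(2) has_derivative_fst[OF f]] .
  from has_derivative_scaleR[OF this f]
  have quotient: "((\<lambda>v. (1 / fst (f v)) *\<^sub>R f v) has_derivative
          (\<lambda>h. inverse (fst (f u)) *\<^sub>R ?Df h
               + (- (inverse (fst (f u)) * fst (?Df h) * inverse (fst (f u)))) *\<^sub>R f u)) (at u)"
    by (simp add: divide_inverse)
  then show ?thesis
    unfolding pderiv_at_def frechet_derivative_at[OF quotient, symmetric]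
    by (simp add: divide_inverse power2_eq_square)
qed

lemma LG_eta: "LG nT nS = (\<lambda>v. nT v + nS v)"
  unfolding LG_def ..

lemma pderiv_at_LGt:
  assumes "smooth_on U nT" "smooth_on U nS" "u \<in> U" "fst (LG nT nS u) \<noteq> 0"
  shows "pderiv_at (LGt nT nS) i u =
           (1 / fst (LG nT nS u)) *\<^sub>R pderiv_at (LG nT nS) i u
           - (fst (pderiv_at (LG nT nS) i u) / (fst (LG nT nS u))\<^sup>2) *\<^sub>R LG nT nS u"
proof -
  have "LG nT nS differentiable at u"
    unfolding LG_eta using assms(1-3) by (intro differentiable_add smooth_on_differentiable)
  moreover have "LGt nT nS = (\<lambda>v. (1 / fst (LG nT nS v)) *\<^sub>R LG nT nS v)"
    unfolding LGt_def ..
  ultimately show ?thesis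
    using pderiv_at_scaleR_inverse_fst assms(4) by simp
qed

theorem proposition3p3:
  fixes U :: "(real^'s) set"
    and X nT nS :: "real^'s \<Rightarrow> real \<times> (real^'n)"
  assumes "open U"
    and "spacelike_embedding U X"
    and "smooth_on U nT" and "smooth_on U nS"
    and "\<forall>u\<in>U. normal_vector X u (nT u) \<and> lor (nT u) (nT u) = -1 \<and> fst (nT u) > 0"
    and "\<forall>u\<in>U. normal_vector X u (nS u) \<and> lor (nS u) (nS u) = 1"
    and "\<forall>u\<in>U. lor (nS u) (nT u) = 0"
    and "u \<in> U"
  shows "pi_tau X u (pderiv_at (LGt nT nS) i u) =
           - (\<Sum>j\<in>UNIV. ((1 / fst (LG nT nS u)) * hup X nT nS u i j) *\<^sub>R pderiv_at X j u)"
proof -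
  have X: "spacelike_at X u"
    using assms(2,8) by (rule spacelike_embedding_imp_spacelike_at)
  have LG_normal: "normal_vector X u (LG nT nS u)"
    using assms(5,6,8) unfolding LG_def by (blast intro: normal_vector_add)
  have l0: "fst (LG nT nS u) > 0"
    unfolding LG_def using assms(5-8) by (blast intro: fst_timelike_add_spacelike_pos)
  have hup_raise: "lor (\<Sum>j\<in>UNIV. hup X nT nS u i j *\<^sub>R pderiv_at X j u) (pderiv_at X k u)
      = - lor (pderiv_at (LG nT nS) i u) (pderiv_at X k u)" for k
    unfolding hup_def lor_raise_index[OF invertible_gmat[OF X]]
    by (simp add: hmat_def LG_eta lor_minus_left)
  have hup_sum_scale: "(\<Sum>j\<in>UNIV. ((1 / fst (LG nT nS u)) * hup X nT nS u i j) *\<^sub>R pderiv_at X j u)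
      = (1 / fst (LG nT nS u)) *\<^sub>R (\<Sum>j\<in>UNIV. hup X nT nS u i j *\<^sub>R pderiv_at X j u)"
    by (simp add: scaleR_sum_right)
  show ?thesis
    unfolding pderiv_at_LGt[OF assms(3,4,8) l0[THEN less_imp_neq, symmetric]]
  proof (rule pi_tau_eqI[OF X])
    show "- (\<Sum>j\<in>UNIV. ((1 / fst (LG nT nS u)) * hup X nT nS u i j) *\<^sub>R pderiv_at X j u)
        \<in> tangent_space X u"
      unfolding tangent_space_def by (intro span_neg span_sum span_scale span_base rangeI)
  qed (use LG_normal l0 in \<open>unfold hup_sum_scale normal_vector_def,
        simp add: lor_add_left lor_diff_left lor_minus_left lor_scaleR_left hup_raise\<close>)
qed

end
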